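(* Consider the redundancy system with $N$ parallel servers and $d\le N$ replicas per job described in the context, with generally distributed replica service requirements $B$. Consider an $M/G/1$ queue with arrival rate $\lambda$ and generic service requirement $\min\{B_1,\dots,B_d\}$, where $B_1,\dots,B_d$ are i.i.d. copies of $B$. Then the sequence of maximum workloads $\omega_{(1)}=\max_i\omega_i$ of the redundancy system at arbitrary epochs is stochastically upper bounded by the sequence of workloads of this $M/G/1$ queue, provided the initial maximum workload of the redundancy system is smaller than the initial workload of the $M/G/1$ queue.
   Context: System: $N$ parallel servers; jobs arrive according to a Poisson process of rate $\lambda$. Each arriving job is replicated into $d$ replicas ($1\le d\le N$), which are sent to $d$ distinct servers chosen uniformly at random without replacement. Replicas are served first-come-first-served at each server; a job is completed as soon as the first of its replicas completes service, at which moment the other $d-1$ replicas are instantaneously abandoned (cancel-on-completion). The service requirements of the $d$ replicas are i.i.d. copies of a nonnegative random variable $B$ (independent across jobs). The workload $\omega_i$ of server $i$ is the real amount of work server $i$ must perform to become idle in the absence of further arrivals; between arrivals each positive workload decreases at unit rate. If a job arrives with sampled servers $s_1,\dots,s_d$ and realized replica requirements $b_1,\dots,b_d$, then the new workload at server $s_l$ is $\max\{\min_{j}(\omega_{s_j}+b_j),\ \omega_{s_l}\}$ for $l=1,\dots,d$, and the workloads of the other servers are unchanged. *)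

theory Defs
  imports Main "HOL-Library.Extended_Real" Complex_Main
begin

definition drain :: "real \<Rightarrow> real \<Rightarrow> real" where
  "drain t x = max (x - t) 0"

text \<open>Arrival update of the redundancy system: job with sampled servers s 0, ..., s (d-1)
  and replica requirements b 0, ..., b (d-1) (cancel-on-completion).\<close>
definition red_update :: "nat \<Rightarrow> (nat \<Rightarrow> nat) \<Rightarrow> (nat \<Rightarrow> real) \<Rightarrow> (nat \<Rightarrow> real) \<Rightarrow> (nat \<Rightarrow> real)" where
  "red_update d s b w = (\<lambda>i. if i \<in> s ` {..<d}
       then max (Min ((\<lambda>j. w (s j) + b j) ` {..<d})) (w i) else w i)"

text \<open>Generic workload dynamics: state x0 at time 0, job n arrives at time arr n,
  dr t x drains state x over a time interval of length t, up n x is the state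
  right after arrival of job n.  post_state n is the state right after the n-th arrival.\<close>
primrec post_state :: "(real \<Rightarrow> 'a \<Rightarrow> 'a) \<Rightarrow> (nat \<Rightarrow> 'a \<Rightarrow> 'a) \<Rightarrow> 'a \<Rightarrow> (nat \<Rightarrow> real) \<Rightarrow> nat \<Rightarrow> 'a" where
  "post_state dr up x0 arr 0 = up 0 (dr (arr 0) x0)"
| "post_state dr up x0 arr (Suc n) =
     up (Suc n) (dr (arr (Suc n) - arr n) (post_state dr up x0 arr n))"

text \<open>State at an arbitrary time t \<ge> 0 (arrival epochs counted as already happened).\<close>
definition state_at :: "(real \<Rightarrow> 'a \<Rightarrow> 'a) \<Rightarrow> (nat \<Rightarrow> 'a \<Rightarrow> 'a) \<Rightarrow> 'a \<Rightarrow> (nat \<Rightarrow> real) \<Rightarrow> real \<Rightarrow> 'a" where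
  "state_at dr up x0 arr t =
     (if t < arr 0 then dr t x0
      else (let n = (GREATEST n. arr n \<le> t) in dr (t - arr n) (post_state dr up x0 arr n)))"

definition red_workload ::
  "nat \<Rightarrow> (nat \<Rightarrow> real) \<Rightarrow> (nat \<Rightarrow> real) \<Rightarrow> (nat \<Rightarrow> nat \<Rightarrow> nat) \<Rightarrow> (nat \<Rightarrow> nat \<Rightarrow> real) \<Rightarrow> real \<Rightarrow> (nat \<Rightarrow> real)" where
  "red_workload d w0 arr S b t =
     state_at (\<lambda>t w i. drain t (w i)) (\<lambda>n w. red_update d (S n) (b n) w) w0 arr t"

definition max_workload :: "nat \<Rightarrow> (nat \<Rightarrow> real) \<Rightarrow> real" where
  "max_workload N w = Max (w ` {..<N})"

definition mg1_workload :: "real \<Rightarrow> (nat \<Rightarrow> real) \<Rightarrow> (nat \<Rightarrow> real) \<Rightarrow> real \<Rightarrow> real" where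
  "mg1_workload v0 arr \<sigma> t = state_at drain (\<lambda>n v. v + \<sigma> n) v0 arr t"

end

theory Submission
  imports Defs
begin

text \<open>Couple the two systems pathwise: same arrival epochs, and job n brings the service
  requirement \<open>min\<^sub>l b n l\<close> to the M/G/1 queue. The relation "maximum workload of the
  redundancy system \<open>\<le>\<close> workload of the queue" is then preserved by both kinds of events.
  Draining at unit rate commutes with taking the maximum. At an arrival, every sampled server
  receives the workload \<open>min\<^sub>j (\<omega>\<^sub>s\<^sub>j + b\<^sub>j)\<close> unless it already has more, and evaluating this
  minimum at the replica j with the smallest requirement bounds it by
  \<open>max\<^sub>i \<omega>\<^sub>i + min\<^sub>j b\<^sub>j\<close>; the unsampled servers are unchanged, and \<open>b \<ge> 0\<close> covers them.\<close>

lemma post_state_rel: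
  assumes drain_rel: "\<And>t x y. 0 \<le> t \<Longrightarrow> R x y \<Longrightarrow> R (dr1 t x) (dr2 t y)"
    and update_rel: "\<And>n x y. R x y \<Longrightarrow> R (up1 n x) (up2 n y)"
    and "R x0 y0" and "0 \<le> arr 0" and "mono arr"
  shows "R (post_state dr1 up1 x0 arr n) (post_state dr2 up2 y0 arr n)"
proof (induction n)
  case 0
  show ?case using assms by simp
next
  case (Suc n)
  have "arr n \<le> arr (Suc n)" using \<open>mono arr\<close> by (simp add: monoD)
  then show ?case using drain_rel update_rel Suc by simp
qed

lemma arr_Greatest_le:
  fixes arr :: "nat \<Rightarrow> real"
  assumes "mono arr" and "\<And>x. \<exists>n. x < arr n" and "arr 0 \<le> t"
  shows "arr (GREATEST n. arr n \<le> t) \<le> t"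
proof -
  obtain k where k: "t < arr k" using assms(2) by blast
  have bound: "n \<le> k" if "arr n \<le> t" for n
  proof (rule ccontr)
    assume "\<not> n \<le> k"
    then have "arr k \<le> arr n" using \<open>mono arr\<close> by (simp add: monoD)
    then show False using that k by simp
  qed
  show ?thesis
    using GreatestI_nat[of "\<lambda>n. arr n \<le> t" 0 k] bound assms(3) by blast
qed

lemma state_at_rel:
  assumes drain_rel: "\<And>t x y. 0 \<le> t \<Longrightarrow> R x y \<Longrightarrow> R (dr1 t x) (dr2 t y)"
    and update_rel: "\<And>n x y. R x y \<Longrightarrow> R (up1 n x) (up2 n y)"
    and "R x0 y0" and "0 \<le> arr 0" and "mono arr"
    and "\<And>x. \<exists>n. x < arr n" and "0 \<le> t"
  shows "R (state_at dr1 up1 x0 arr t) (state_at dr2 up2 y0 arr t)"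
proof (cases "t < arr 0")
  case True
  then show ?thesis using drain_rel \<open>R x0 y0\<close> \<open>0 \<le> t\<close> by (simp add: state_at_def)
next
  case False
  then have "arr (GREATEST n. arr n \<le> t) \<le> t"
    using arr_Greatest_le[OF \<open>mono arr\<close> \<open>\<And>x. \<exists>n. x < arr n\<close>] by simp
  then show ?thesis
    using False drain_rel post_state_rel[of R dr1 dr2 up1 up2, OF drain_rel update_rel assms(3-5)]
    by (simp add: state_at_def Let_def)
qed

lemma drain_mono: "x \<le> y \<Longrightarrow> drain t x \<le> drain t y"
  by (simp add: drain_def)

lemma max_workload_drain:
  assumes "0 < N"
  shows "max_workload N (\<lambda>i. drain t (w i)) = drain t (max_workload N w)"
proof -
  have "drain t (Max (w ` {..<N})) = Max (drain t ` w ` {..<N})"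
    using assms by (intro mono_Max_commute) (auto simp: mono_def drain_mono)
  then show ?thesis unfolding max_workload_def by (simp add: image_image)
qed

lemma le_max_workload: "i < N \<Longrightarrow> w i \<le> max_workload N w"
  unfolding max_workload_def by simp

lemma Min_add_le_max_workload_add_Min:
  fixes b :: "nat \<Rightarrow> real"
  assumes "0 < d" and "s ` {..<d} \<subseteq> {..<N}"
  shows "Min ((\<lambda>j. w (s j) + b j) ` {..<d}) \<le> max_workload N w + Min (b ` {..<d})"
proof -
  obtain j where j: "j < d" "b j = Min (b ` {..<d})"
    using Min_in[of "b ` {..<d}"] \<open>0 < d\<close> by fastforce
  have "Min ((\<lambda>j. w (s j) + b j) ` {..<d}) \<le> w (s j) + b j"
    using j(1) by (intro Min_le) auto
  also have "\<dots> \<le> max_workload N w + Min (b ` {..<d})"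
    using j assms(2) le_max_workload[of "s j" N w] by auto
  finally show ?thesis .
qed

lemma max_workload_red_update_le:
  fixes b :: "nat \<Rightarrow> real"
  assumes "0 < d" and "s ` {..<d} \<subseteq> {..<N}"
    and "\<And>l. l < d \<Longrightarrow> 0 \<le> b l" and "max_workload N w \<le> v"
  shows "max_workload N (red_update d s b w) \<le> v + Min (b ` {..<d})"
proof -
  have "0 \<le> Min (b ` {..<d})"
    using assms(1,3) by (subst Min_ge_iff) auto
  have "red_update d s b w i \<le> v + Min (b ` {..<d})" if "i < N" for i
  proof -
    have "w i \<le> v + Min (b ` {..<d})"
      using le_max_workload[OF that, of w] \<open>max_workload N w \<le> v\<close> \<open>0 \<le> Min (b ` {..<d})\<close>
      by linarith
    moreover have "Min ((\<lambda>j. w (s j) + b j) ` {..<d}) \<le> v + Min (b ` {..<d})"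
      using Min_add_le_max_workload_add_Min[OF assms(1,2), of w b] \<open>max_workload N w \<le> v\<close>
      by linarith
    ultimately show ?thesis
      unfolding red_update_def by simp
  qed
  moreover have "s 0 \<in> {..<N}" using assms(1,2) by auto
  ultimately show ?thesis
    unfolding max_workload_def by (subst Max_le_iff) auto
qed

theorem lemma1:
  fixes N d :: nat
    and w0 :: "nat \<Rightarrow> real"          \<comment> \<open>initial workloads of the N servers\<close>
    and v0 :: real                     \<comment> \<open>initial workload of the M/G/1 queue\<close>
    and arr :: "nat \<Rightarrow> real"         \<comment> \<open>arrival epochs (common to both systems)\<close>
    and S :: "nat \<Rightarrow> nat \<Rightarrow> nat"     \<comment> \<open>S n l : l-th sampled server of job n\<close>
    and b :: "nat \<Rightarrow> nat \<Rightarrow> real"    \<comment> \<open>b n l : requirement of l-th replica of job n\<close>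
  assumes "1 \<le> d" and "d \<le> N"
    and "\<And>i. i < N \<Longrightarrow> 0 \<le> w0 i"
    and "0 \<le> arr 0" and "strict_mono arr" and "\<And>x. \<exists>n. x < arr n"
    and "\<And>n. inj_on (S n) {..<d}" and "\<And>n. S n ` {..<d} \<subseteq> {..<N}"
    and "\<And>n l. l < d \<Longrightarrow> 0 \<le> b n l"
    and "max_workload N w0 \<le> v0"
  shows "\<forall>t\<ge>0. max_workload N (red_workload d w0 arr S b t)
                \<le> mg1_workload v0 arr (\<lambda>n. Min (b n ` {..<d})) t"
proof (intro allI impI)
  fix t :: real
  assume "0 \<le> t"
  let ?R = "\<lambda>w v. max_workload N w \<le> v"
  have "0 < d" "0 < N" using assms(1,2) by simp_all
  have drain_rel: "?R (\<lambda>i. drain t' (w i)) (drain t' v)" if "?R w v" for t' w v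
    using that max_workload_drain[OF \<open>0 < N\<close>] drain_mono by simp
  have update_rel: "?R (red_update d (S n) (b n) w) (v + Min (b n ` {..<d}))"
    if "?R w v" for n w v
    using max_workload_red_update_le[OF \<open>0 < d\<close> assms(8,9) that] .
  show "max_workload N (red_workload d w0 arr S b t)
          \<le> mg1_workload v0 arr (\<lambda>n. Min (b n ` {..<d})) t"
    unfolding red_workload_def mg1_workload_def
    using state_at_rel[where R = ?R, OF drain_rel update_rel assms(10,4)
        strict_mono_mono[OF assms(5)] assms(6) \<open>0 \<le> t\<close>] .
qed

end
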